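(* Let $n$ be a positive integer such that $n\equiv \pm 2\pmod{12}$. Then it is possible to place $n-1$ queens on $\mathbb{Z}_n^2$ without conflict.
   Context: Queens are placed on distinct fields of the torus board $\mathbb{Z}_n^2$. Two queens at distinct fields $(x,y),(x',y')$ are in conflict iff $x=x'$, or $y=y'$, or $x+y=x'+y'$, or $x-y=x'-y'$ in $\mathbb{Z}_n$ (equivalently, the difference of the fields is $t\mathbf{x}$ for some $t\in\mathbb{Z}_n$ and nonzero $\mathbf{x}\in\{-1,0,1\}^2$). A placement is without conflict if no two queens are in conflict. *)

theory Defs
  imports Main
begin

text \<open>Fields of the torus board Z_n^2 are represented by pairs (x,y) of integers
  with 0 \<le> x, y < n; arithmetic of Z_n is arithmetic modulo n.\<close>

definition torus_board :: "int \<Rightarrow> (int \<times> int) set" where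
  "torus_board n = {0..<n} \<times> {0..<n}"

definition queens_conflict :: "int \<Rightarrow> int \<times> int \<Rightarrow> int \<times> int \<Rightarrow> bool" where
  "queens_conflict n p q \<longleftrightarrow> p \<noteq> q \<and>
     (fst p mod n = fst q mod n \<or> snd p mod n = snd q mod n \<or>
      (fst p + snd p) mod n = (fst q + snd q) mod n \<or>
      (fst p - snd p) mod n = (fst q - snd q) mod n)"

definition conflict_free :: "int \<Rightarrow> (int \<times> int) set \<Rightarrow> bool" where
  "conflict_free n Q \<longleftrightarrow> (\<forall>p\<in>Q. \<forall>q\<in>Q. \<not> queens_conflict n p q)"

end

theory Submission
  imports Defs "HOL-Computational_Algebra.Primes"
begin

text \<open>Write \<open>n = 2 m\<close> with \<open>m\<close> odd and prime to 3, and put a queen in every column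
  \<open>i = 1, \<dots>, n - 1\<close>, at row \<open>3 (i - 1)\<close> if \<open>i < m\<close> and at row \<open>3 i\<close> if \<open>i \<ge> m\<close>.
  Rows are distinct because 3 is invertible modulo \<open>n\<close>. The sum \<open>i + y\<close> and the
  difference \<open>i - y\<close> of a queen are \<open>4 i\<close> resp. \<open>-2 i\<close>, shifted by 3 exactly on the
  lower half; since \<open>n\<close> is even, their parity tells the halves apart, and within one half
  (an interval of length \<open>m\<close>) \<open>4 i\<close> and \<open>-2 i\<close> are injective modulo \<open>n\<close> because \<open>m\<close> is odd.\<close>

lemma conflict_free_graph:
  fixes n :: int and f :: "int \<Rightarrow> int"
  assumes "S \<subseteq> {0..<n}"
    and "inj_on (\<lambda>i. f i mod n) S"
    and "inj_on (\<lambda>i. (i + f i) mod n) S"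
    and "inj_on (\<lambda>i. (i - f i) mod n) S"
  shows "conflict_free n ((\<lambda>i. (i, f i mod n)) ` S)"
proof -
  have "\<not> queens_conflict n (i, f i mod n) (j, f j mod n)" if i: "i \<in> S" and j: "j \<in> S" for i j
  proof (cases "i = j")
    case False
    have "i mod n = i" and "j mod n = j"
      using assms(1) i j by auto
    then have "i mod n \<noteq> j mod n"
      using False by simp
    moreover have "f i mod n \<noteq> f j mod n"
      using assms(2) i j False by (auto dest: inj_onD)
    moreover have "(i + f i mod n) mod n \<noteq> (j + f j mod n) mod n"
      using assms(3) i j False by (auto simp: mod_add_right_eq dest: inj_onD)
    moreover have "(i - f i mod n) mod n \<noteq> (j - f j mod n) mod n"
      using assms(4) i j False by (auto simp: mod_diff_right_eq dest: inj_onD)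
    ultimately show ?thesis
      by (simp add: queens_conflict_def)
  qed (simp add: queens_conflict_def)
  then show ?thesis
    unfolding conflict_free_def by blast
qed

text \<open>For \<open>0 < i < 2 m\<close> the quotient \<open>i div m\<close> is 0 on the lower and 1 on the upper half,
  so this is the row \<open>3 (i - 1)\<close> resp. \<open>3 i\<close>.\<close>

definition queen_row :: "int \<Rightarrow> int \<Rightarrow> int" where
  "queen_row m i = 3 * (i + i div m - 1)"

lemma div_in_01:
  fixes m i :: int
  assumes "m > 0" and "i \<in> {0..<2*m}"
  shows "i div m \<in> {0, 1}"
proof (cases "i < m")
  case True
  then show ?thesis
    using assms by simp
next
  case False
  then have "(i - m) div m = 0"
    using assms by simp
  then show ?thesis
    using div_add_self2[of m "i - m"] assms by simp
qed

lemma eq_if_dvd_same_half: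
  fixes m c i j :: int
  assumes "m > 0" and "i \<in> {0..<2*m}" and "j \<in> {0..<2*m}"
    and "even c" and "coprime m c"
    and dvd: "2*m dvd c * (i - j) + 3 * (i div m - j div m)"
  shows "i = j"
proof -
  have "2 dvd c * (i - j) + 3 * (i div m - j div m)"
    using dvd by (rule dvd_mult_left)
  then have "even (i div m - j div m)"
    using \<open>even c\<close> by simp
  with div_in_01[OF assms(1,2)] div_in_01[OF assms(1,3)]
  have same_half: "i div m = j div m"
    by auto
  then have "m dvd c * (i - j)"
    using dvd by (simp add: dvd_mult_right)
  then have "i mod m = j mod m"
    using \<open>coprime m c\<close> by (simp add: coprime_dvd_mult_right_iff mod_eq_dvd_iff)
  then show "i = j"
    using same_half by (metis div_mult_mod_eq)
qed

lemma inj_on_queen_row: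
  fixes m :: int
  assumes "m > 0" and "coprime 3 m"
  shows "inj_on (\<lambda>i. queen_row m i mod (2*m)) {1..<2*m}"
proof -
  define g where "g i = i + i div m - 1" for i
  have g_mono: "strict_mono_on {1..<2*m} g"
    by (rule strict_mono_onI) (simp add: g_def zdiv_mono1 \<open>m > 0\<close> add_less_le_mono)
  have g_range: "g i \<in> {0..<2*m}" if "i \<in> {1..<2*m}" for i
    using div_in_01[OF \<open>m > 0\<close>, of i] that by (auto simp: g_def)
  have "coprime (2*m) 3"
    using \<open>coprime 3 m\<close> by (simp add: coprime_commute)
  show ?thesis
  proof (rule inj_onI)
    fix i j assume i: "i \<in> {1..<2*m}" and j: "j \<in> {1..<2*m}"
      and "queen_row m i mod (2*m) = queen_row m j mod (2*m)"
    then have "2*m dvd 3 * (g i - g j)"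
      by (simp add: queen_row_def g_def mod_eq_dvd_iff algebra_simps)
    then have "g i mod (2*m) = g j mod (2*m)"
      using coprime_dvd_mult_right_iff[OF \<open>coprime (2*m) 3\<close>] by (simp only: mod_eq_dvd_iff)
    then have "g i = g j"
      using g_range[OF i] g_range[OF j] by simp
    then show "i = j"
      using inj_onD[OF strict_mono_on_imp_inj_on[OF g_mono]] i j by blast
  qed
qed

lemma inj_on_queen_sum:
  fixes m :: int
  assumes "m > 0" and "odd m"
  shows "inj_on (\<lambda>i. (i + queen_row m i) mod (2*m)) {1..<2*m}"
proof (rule inj_onI)
  fix i j assume "i \<in> {1..<2*m}" and "j \<in> {1..<2*m}"
    and "(i + queen_row m i) mod (2*m) = (j + queen_row m j) mod (2*m)"
  then have "2*m dvd 4 * (i - j) + 3 * (i div m - j div m)"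
    by (simp add: queen_row_def mod_eq_dvd_iff algebra_simps)
  moreover have "coprime m 4"
    using \<open>odd m\<close> coprime_power_right_iff[of m 2 2] by simp
  ultimately show "i = j"
    using eq_if_dvd_same_half[OF \<open>m > 0\<close>, of i j 4] \<open>i \<in> _\<close> \<open>j \<in> _\<close> by simp
qed

lemma inj_on_queen_diff:
  fixes m :: int
  assumes "m > 0" and "odd m"
  shows "inj_on (\<lambda>i. (i - queen_row m i) mod (2*m)) {1..<2*m}"
proof (rule inj_onI)
  fix i j assume "i \<in> {1..<2*m}" and "j \<in> {1..<2*m}"
    and "(i - queen_row m i) mod (2*m) = (j - queen_row m j) mod (2*m)"
  then have "2*m dvd 2 * (i - j) + 3 * (i div m - j div m)"
    by (simp add: queen_row_def mod_eq_dvd_iff algebra_simps dvd_diff_commute)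
  moreover have "coprime m 2"
    using \<open>odd m\<close> by simp
  ultimately show "i = j"
    using eq_if_dvd_same_half[OF \<open>m > 0\<close>, of i j 2] \<open>i \<in> _\<close> \<open>j \<in> _\<close> by simp
qed

lemma conflict_free_queen_rows:
  fixes m :: int
  assumes "m > 0" and "odd m" and "coprime 3 m"
  shows "conflict_free (2*m) ((\<lambda>i. (i, queen_row m i mod (2*m))) ` {1..<2*m})"
  using assms by (intro conflict_free_graph inj_on_queen_row inj_on_queen_sum inj_on_queen_diff) auto

theorem lemma2:
  fixes n :: int
  assumes "n > 0"
    and "n mod 12 = 2 \<or> n mod 12 = 10"
  shows "\<exists>Q. Q \<subseteq> torus_board n \<and> card Q = nat (n - 1) \<and> conflict_free n Q"
proof -
  define m where "m = n div 2"
  have n: "n = 2*m" and "odd m" and "\<not> 3 dvd m"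
    using assms(2) unfolding m_def by presburger+
  have "m > 0"
    using assms(1) n by simp
  have "coprime 3 m"
    using \<open>\<not> 3 dvd m\<close> by (simp add: prime_imp_coprime)
  let ?Q = "(\<lambda>i. (i, queen_row m i mod n)) ` {1..<n}"
  have "?Q \<subseteq> torus_board n"
    using assms(1) by (auto simp: torus_board_def)
  moreover have "card ?Q = nat (n - 1)"
    by (simp add: card_image inj_on_def)
  moreover have "conflict_free n ?Q"
    unfolding n using \<open>m > 0\<close> \<open>odd m\<close> \<open>coprime 3 m\<close> by (rule conflict_free_queen_rows)
  ultimately show ?thesis
    by blast
qed

end
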